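(* Let $\mathbb{F}$ be a field, $A\in\mathbb{F}^{k\times n}$ a matrix of rank $k$, $W$ the row space of $A$, and $M=M(A)$. For every $u\in\mathbb{F}^k$ there exists $v\in\mathbb{F}^n$ such that $M/u=M/^\bullet v$, and conversely, for every $v\in\mathbb{F}^n$ there exists $u\in\mathbb{F}^k$ such that $M/u=M/^\bullet v$.
   Context: Both matroids are on the ground set $\{1,\dots,n\}$ indexing the columns of $A$. $M/u$ is the matroid in which a set of columns $\{c_1,\dots,c_\ell\}$ of $A$ is dependent iff there exist $\alpha_1,\dots,\alpha_\ell\in\mathbb{F}$, not all $0$, with $\sum_i\alpha_ic_i\in\mathrm{span}(u)$. For a subspace $U\subseteq\mathbb{F}^n$, $M(U)$ is the column matroid of a matrix whose rows form a basis of $U$, and $M/^\bullet v:=M(W\cap\mathrm{span}(v)^\perp)$, where $\mathrm{span}(v)^\perp=\{x\in\mathbb{F}^n:\sum_ix_iv_i=0\}$. *)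

theory Defs
  imports Main
begin

text \<open>A k x n matrix over a field is a function A :: nat => nat => 'a,
  with rows indexed by i < k and columns by j < n (0-based); entries outside are irrelevant.
  Vectors of F^m are functions nat => 'a whose coordinates < m are relevant.
  The ground set of all matroids is {0..<n} (column indices).
  A matroid on {0..<n} is represented by its dependence predicate on subsets.\<close>

definition rows_independent :: "(nat \<Rightarrow> nat \<Rightarrow> 'a::field) \<Rightarrow> nat \<Rightarrow> nat \<Rightarrow> bool" where
  "rows_independent A k n \<longleftrightarrow>
     (\<forall>c. (\<forall>j<n. (\<Sum>i<k. c i * A i j) = 0) \<longrightarrow> (\<forall>i<k. c i = 0))"

definition row_space :: "(nat \<Rightarrow> nat \<Rightarrow> 'a::field) \<Rightarrow> nat \<Rightarrow> nat \<Rightarrow> (nat \<Rightarrow> 'a) set" where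
  "row_space A k n = {x. (\<forall>j. n \<le> j \<longrightarrow> x j = 0) \<and>
                         (\<exists>c. \<forall>j<n. x j = (\<Sum>i<k. c i * A i j))}"

definition perp :: "nat \<Rightarrow> (nat \<Rightarrow> 'a::field) \<Rightarrow> (nat \<Rightarrow> 'a) set" where
  "perp n v = {x. (\<forall>j. n \<le> j \<longrightarrow> x j = 0) \<and> (\<Sum>j<n. x j * v j) = 0}"

definition col_dep :: "(nat \<Rightarrow> nat \<Rightarrow> 'a::field) \<Rightarrow> nat \<Rightarrow> nat set \<Rightarrow> bool" where
  "col_dep B r S \<longleftrightarrow>
     (\<exists>\<alpha>. (\<exists>j\<in>S. \<alpha> j \<noteq> 0) \<and> (\<forall>i<r. (\<Sum>j\<in>S. \<alpha> j * B i j) = 0))"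

definition basis_matrix :: "nat \<Rightarrow> (nat \<Rightarrow> 'a::field) set \<Rightarrow> nat \<Rightarrow> (nat \<Rightarrow> nat \<Rightarrow> 'a) \<Rightarrow> bool" where
  "basis_matrix n U r B \<longleftrightarrow> rows_independent B r n \<and> row_space B r n = U"

definition subspace_matroid_dep :: "nat \<Rightarrow> (nat \<Rightarrow> 'a::field) set \<Rightarrow> nat set \<Rightarrow> bool" where
  "subspace_matroid_dep n U =
     (let (r, B) = (SOME (r, B). basis_matrix n U r B) in col_dep B r)"

definition contr_dep :: "(nat \<Rightarrow> nat \<Rightarrow> 'a::field) \<Rightarrow> nat \<Rightarrow> (nat \<Rightarrow> 'a) \<Rightarrow> nat set \<Rightarrow> bool" where
  "contr_dep A k u S \<longleftrightarrow>
     (\<exists>\<alpha>. (\<exists>j\<in>S. \<alpha> j \<noteq> 0) \<and>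
          (\<exists>t. \<forall>i<k. (\<Sum>j\<in>S. \<alpha> j * A i j) = t * u i))"

definition bullet_contr_dep :: "(nat \<Rightarrow> nat \<Rightarrow> 'a::field) \<Rightarrow> nat \<Rightarrow> nat \<Rightarrow> (nat \<Rightarrow> 'a) \<Rightarrow> nat set \<Rightarrow> bool" where
  "bullet_contr_dep A k n v = subspace_matroid_dep n (row_space A k n \<inter> perp n v)"

definition same_matroid :: "nat \<Rightarrow> (nat set \<Rightarrow> bool) \<Rightarrow> (nat set \<Rightarrow> bool) \<Rightarrow> bool" where
  "same_matroid n D1 D2 \<longleftrightarrow> (\<forall>S. S \<subseteq> {0..<n} \<longrightarrow> (D1 S \<longleftrightarrow> D2 S))"

end

(* If u = A v, then c^T u = (c^T A) v, so the row combinations c^T A with c orthogonal to u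
   are exactly W \<inter> span(v)^perp. A combination of the columns in S lies in span(u) iff every
   c orthogonal to u annihilates it, i.e. iff its coefficient vector annihilates
   W \<inter> span(v)^perp. That is exactly dependence of S in the column matroid of any basis matrix of
   W \<inter> span(v)^perp, and such a matrix exists: subtract multiples of a row i with u_i \<noteq> 0
   from the other rows and drop row i. Finally, since A has full row rank, v \<mapsto> A v maps
   onto F^k, so every u is of the form A v. *)
theory Submission
  imports Defs "HOL-Combinatorics.Transposition"
begin

definition row_comb ::
    "(nat \<Rightarrow> nat \<Rightarrow> 'a::field) \<Rightarrow> nat \<Rightarrow> nat \<Rightarrow> (nat \<Rightarrow> 'a) \<Rightarrow> nat \<Rightarrow> 'a" where
  "row_comb B r n c j = (if j < n then \<Sum>i<r. c i * B i j else 0)"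

definition mat_vec :: "(nat \<Rightarrow> nat \<Rightarrow> 'a::field) \<Rightarrow> nat \<Rightarrow> (nat \<Rightarrow> 'a) \<Rightarrow> nat \<Rightarrow> 'a" where
  "mat_vec A n v i = (\<Sum>j<n. A i j * v j)"

lemma sum_unit_mult:
  fixes f :: "nat \<Rightarrow> 'a::field"
  assumes "i < k"
  shows "(\<Sum>l<k. (if l = i then 1 else 0) * f l) = f i"
  using assms by (simp add: if_distrib[where f = "\<lambda>y. y * z" for z] cong: if_cong)

lemma row_space_eq_range: "row_space B r n = range (row_comb B r n)"
  unfolding row_space_def row_comb_def by (auto simp: fun_eq_iff)

lemma rows_independent_iff_row_comb:
  "rows_independent B r n \<longleftrightarrow> (\<forall>c. row_comb B r n c = (\<lambda>_. 0) \<longrightarrow> (\<forall>i<r. c i = 0))"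
  unfolding rows_independent_def row_comb_def by (auto simp: fun_eq_iff)

lemma sum_mult_row_comb:
  assumes "S \<subseteq> {..<n}"
  shows "(\<Sum>j\<in>S. \<alpha> j * row_comb B r n c j) = (\<Sum>i<r. c i * (\<Sum>j\<in>S. \<alpha> j * B i j))"
proof -
  have "(\<Sum>j\<in>S. \<alpha> j * row_comb B r n c j) = (\<Sum>j\<in>S. \<Sum>i<r. \<alpha> j * (c i * B i j))"
    using assms by (intro sum.cong) (auto simp: row_comb_def sum_distrib_left)
  also have "\<dots> = (\<Sum>i<r. c i * (\<Sum>j\<in>S. \<alpha> j * B i j))"
    by (subst sum.swap) (simp add: sum_distrib_left ac_simps)
  finally show ?thesis .
qed

lemma row_space_inter_perp:
  "x \<in> row_space A k n \<inter> perp n v \<longleftrightarrow>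
     (\<exists>c. x = row_comb A k n c \<and> (\<Sum>i<k. c i * mat_vec A n v i) = 0)"
proof -
  have "(\<Sum>j<n. row_comb A k n c j * v j) = (\<Sum>i<k. c i * mat_vec A n v i)" for c
    using sum_mult_row_comb[of "{..<n}" n v A k c] by (simp add: mat_vec_def ac_simps)
  then show ?thesis
    by (auto simp: row_space_eq_range perp_def row_comb_def)
qed

lemma in_span_iff_annihilator:
  fixes u y :: "nat \<Rightarrow> 'a::field"
  shows "(\<exists>t. \<forall>i<k. y i = t * u i) \<longleftrightarrow>
           (\<forall>c. (\<Sum>i<k. c i * u i) = 0 \<longrightarrow> (\<Sum>i<k. c i * y i) = 0)"
proof
  assume "\<exists>t. \<forall>i<k. y i = t * u i"
  then obtain t where "\<forall>i<k. y i = t * u i" by blast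
  then have "(\<Sum>i<k. c i * y i) = t * (\<Sum>i<k. c i * u i)" for c
    by (simp add: sum_distrib_left ac_simps)
  then show "\<forall>c. (\<Sum>i<k. c i * u i) = 0 \<longrightarrow> (\<Sum>i<k. c i * y i) = 0" by simp
next
  assume annihilator: "\<forall>c. (\<Sum>i<k. c i * u i) = 0 \<longrightarrow> (\<Sum>i<k. c i * y i) = 0"
  show "\<exists>t. \<forall>i<k. y i = t * u i"
  proof (cases "\<forall>i<k. u i = 0")
    case True
    have "y i = 0" if "i < k" for i
      using annihilator[rule_format, of "\<lambda>l. if l = i then 1 else 0"] True that
      by (simp add: sum_unit_mult)
    then show ?thesis by auto
  next
    case False
    then obtain i0 where i0: "i0 < k" "u i0 \<noteq> 0" by auto
    have "u i0 * y i - u i * y i0 = 0" if "i < k" for i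
    proof (cases "i = i0")
      case False
      \<comment> \<open>the vector u i0 e_i - u i e_i0 is orthogonal to u\<close>
      let ?c = "\<lambda>l. (if l = i then u i0 else 0) + (if l = i0 then - u i else 0)"
      have "(\<Sum>l<k. ?c l * f l) = u i0 * f i - u i * f i0" for f
        using that i0(1) False
        by (simp add: distrib_right sum.distrib if_distrib[where f = "\<lambda>y. y * z" for z] cong: if_cong)
      then show ?thesis
        using annihilator[rule_format, of ?c] by (simp add: ac_simps)
    qed simp
    then have "\<forall>i<k. y i = y i0 / u i0 * u i"
      using i0(2) by (auto simp: field_simps)
    then show ?thesis by blast
  qed
qed

lemma row_comb_subtract_last_row:
  "row_comb (\<lambda>i j. A i j - w i * A m j) m n c = row_comb A (Suc m) n (c(m := - (\<Sum>i<m. c i * w i)))"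
proof -
  have "(\<Sum>i<m. c i * (A i j - w i * A m j)) = (\<Sum>i<m. (c(m := x)) i * A i j) + x * A m j"
    if "x = - (\<Sum>i<m. c i * w i)" for x j
    using that by (simp add: algebra_simps sum_subtractf sum_distrib_left sum_distrib_right)
  then show ?thesis
    by (simp add: row_comb_def fun_eq_iff)
qed

lemma mat_vec_subtract_last_row:
  "mat_vec (\<lambda>i j. A i j - w i * A m j) n v i = mat_vec A n v i - w i * mat_vec A n v m"
  by (simp add: mat_vec_def algebra_simps sum_subtractf sum_distrib_left)

lemma rows_independent_subtract_last_row:
  assumes "rows_independent A (Suc m) n"
  shows "rows_independent (\<lambda>i j. A i j - w i * A m j) m n"
  unfolding rows_independent_iff_row_comb row_comb_subtract_last_row
proof (intro allI impI)
  fix c i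
  assume zero: "row_comb A (Suc m) n (c(m := - (\<Sum>i<m. c i * w i))) = (\<lambda>_. 0)" and "i < m"
  have "(c(m := - (\<Sum>i<m. c i * w i))) i = 0"
    using assms[unfolded rows_independent_iff_row_comb, rule_format, OF zero, of i] \<open>i < m\<close> by simp
  with \<open>i < m\<close> show "c i = 0" by simp
qed

lemma rows_independent_row_nonzero:
  assumes "rows_independent A k n" "i < k"
  shows "\<exists>j<n. A i j \<noteq> 0"
proof (rule ccontr)
  assume "\<not> (\<exists>j<n. A i j \<noteq> 0)"
  then have "\<forall>j<n. (\<Sum>l<k. (if l = i then 1 else 0) * A l j) = 0"
    using assms(2) by (simp add: sum_unit_mult)
  then show False
    using assms unfolding rows_independent_def by fastforce
qed

lemma mat_vec_add_unit:
  assumes "j0 < n"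
  shows "mat_vec A n (\<lambda>j. v j + (if j = j0 then t else 0)) i = mat_vec A n v i + A i j0 * t"
  using assms
  by (simp add: mat_vec_def distrib_left sum.distrib if_distrib[where f = "\<lambda>y. z * y" for z]
      cong: if_cong)

lemma mat_vec_surj:
  assumes "rows_independent A k n"
  shows "\<exists>v. \<forall>i<k. mat_vec A n v i = u i"
  using assms
proof (induction k arbitrary: A u)
  case 0
  then show ?case by simp
next
  case (Suc m)
  \<comment> \<open>clear column j0 from the other rows with the pivot A m j0, solve that system by
    induction, then move v along e_j0 to satisfy row m\<close>
  obtain j0 where j0: "j0 < n" "A m j0 \<noteq> 0"
    using rows_independent_row_nonzero[OF Suc.prems] by blast
  define w where "w i = A i j0 / A m j0" for i
  define A' where "A' i j = A i j - w i * A m j" for i j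
  have "rows_independent A' m n"
    unfolding A'_def by (rule rows_independent_subtract_last_row[OF Suc.prems])
  then obtain v' where v': "\<forall>i<m. mat_vec A' n v' i = u i - w i * u m"
    using Suc.IH[where u = "\<lambda>i. u i - w i * u m"] by blast
  define t where "t = (u m - mat_vec A n v' m) / A m j0"
  define v where "v = (\<lambda>j. v' j + (if j = j0 then t else 0))"
  have shift: "mat_vec B n v i = mat_vec B n v' i + B i j0 * t" for B i
    unfolding v_def by (rule mat_vec_add_unit[OF j0(1)])
  have last: "mat_vec A n v m = u m"
    using shift j0(2) by (simp add: t_def)
  have "mat_vec A' n v i = mat_vec A' n v' i" for i
    using shift j0(2) by (simp add: A'_def w_def)
  then have "mat_vec A n v i = u i" if "i < m" for i
    using v' that last mat_vec_subtract_last_row[of A w m n v i] by (simp add: A'_def[abs_def])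
  then show ?case
    using last less_Suc_eq by auto
qed

lemma row_comb_transpose_rows:
  assumes "a < k" "b < k"
  shows "row_comb (\<lambda>i. A (transpose a b i)) k n c = row_comb A k n (c \<circ> transpose a b)"
proof -
  have "(\<Sum>i<k. c i * A (transpose a b i) j) = (\<Sum>i<k. c (transpose a b i) * A i j)" for j
    using assms
      sum.reindex_bij_betw[of "transpose a b" "{..<k}" "{..<k}" "\<lambda>i. c (transpose a b i) * A i j"]
    by simp
  then show ?thesis
    by (simp add: row_comb_def fun_eq_iff)
qed

lemma row_space_transpose_rows:
  assumes "a < k" "b < k"
  shows "row_space (\<lambda>i. A (transpose a b i)) k n = row_space A k n"
proof -
  have "surj (\<lambda>c :: nat \<Rightarrow> 'a. c \<circ> transpose a b)"
    by (rule surjI[where f = "\<lambda>c. c \<circ> transpose a b"]) (simp add: fun_eq_iff)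
  then show ?thesis
    unfolding row_space_eq_range row_comb_transpose_rows[OF assms]
    using image_image[of "row_comb A k n" "\<lambda>c. c \<circ> transpose a b" UNIV] by simp
qed

lemma rows_independent_transpose_rows:
  assumes "a < k" "b < k" "rows_independent A k n"
  shows "rows_independent (\<lambda>i. A (transpose a b i)) k n"
  unfolding rows_independent_iff_row_comb row_comb_transpose_rows[OF assms(1,2)]
proof (intro allI impI)
  fix c i
  assume "row_comb A k n (c \<circ> transpose a b) = (\<lambda>_. 0)" "i < k"
  then have "\<forall>l<k. (c \<circ> transpose a b) l = 0"
    using assms(3) unfolding rows_independent_iff_row_comb by blast
  moreover have "transpose a b i < k"
    using assms(1,2) \<open>i < k\<close> by (simp add: transpose_def)
  ultimately have "(c \<circ> transpose a b) (transpose a b i) = 0" by blast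
  then show "c i = 0" by simp
qed

lemma basis_matrix_row_space_inter_perp_last_pivot:
  assumes "rows_independent A (Suc m) n" "mat_vec A n v m \<noteq> 0"
  defines "B \<equiv> \<lambda>i j. A i j - mat_vec A n v i / mat_vec A n v m * A m j"
  shows "basis_matrix n (row_space A (Suc m) n \<inter> perp n v) m B"
proof -
  let ?u = "mat_vec A n v"
  have B_comb: "row_comb B m n c = row_comb A (Suc m) n (c(m := - (\<Sum>i<m. c i * (?u i / ?u m))))" for c
    unfolding B_def by (rule row_comb_subtract_last_row)
  have "mat_vec B n v i = ?u i - ?u i / ?u m * ?u m" for i
    unfolding B_def by (rule mat_vec_subtract_last_row)
  then have Bv: "mat_vec B n v i = 0" for i
    using assms(2) by simp
  have "row_space B m n = row_space A (Suc m) n \<inter> perp n v"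
  proof (intro set_eqI iffI)
    fix x assume "x \<in> row_space B m n"
    then obtain c where x: "x = row_comb B m n c"
      by (auto simp: row_space_eq_range)
    then have "x \<in> row_space B m n \<inter> perp n v"
      using Bv row_space_inter_perp[of x B m n v] by auto
    moreover have "x \<in> row_space A (Suc m) n"
      unfolding x B_comb row_space_eq_range by (rule rangeI)
    ultimately show "x \<in> row_space A (Suc m) n \<inter> perp n v" by blast
  next
    fix x assume "x \<in> row_space A (Suc m) n \<inter> perp n v"
    then obtain c where x: "x = row_comb A (Suc m) n c" and c: "(\<Sum>i<Suc m. c i * ?u i) = 0"
      using row_space_inter_perp[of x A "Suc m" n v] by auto
    have "(\<Sum>i<m. c i * (?u i / ?u m)) = (\<Sum>i<m. c i * ?u i) / ?u m"
      by (simp add: sum_divide_distrib)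
    also have "(\<Sum>i<m. c i * ?u i) = - (c m * ?u m)"
      using c by (simp add: eq_neg_iff_add_eq_0)
    finally have "- (\<Sum>i<m. c i * (?u i / ?u m)) = c m"
      using assms(2) by simp
    then have "c(m := - (\<Sum>i<m. c i * (?u i / ?u m))) = c"
      by auto
    then have "x = row_comb B m n c"
      unfolding x B_comb by simp
    then show "x \<in> row_space B m n"
      by (simp add: row_space_eq_range)
  qed
  moreover have "rows_independent B m n"
    unfolding B_def by (rule rows_independent_subtract_last_row[OF assms(1)])
  ultimately show ?thesis
    by (simp add: basis_matrix_def)
qed

lemma basis_matrix_row_space_inter_perp_exists:
  assumes "rows_independent A k n"
  shows "\<exists>r B. basis_matrix n (row_space A k n \<inter> perp n v) r B"
proof (cases "\<forall>i<k. mat_vec A n v i = 0")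
  case True
  then have "x \<in> row_space A k n \<inter> perp n v \<longleftrightarrow> x \<in> row_space A k n" for x
    using row_space_inter_perp[of x A k n v] by (auto simp: row_space_eq_range)
  then have "row_space A k n \<inter> perp n v = row_space A k n" by blast
  then show ?thesis
    using assms by (auto simp: basis_matrix_def)
next
  case False
  then obtain i0 where i0: "i0 < k" "mat_vec A n v i0 \<noteq> 0" by auto
  then obtain m where k: "k = Suc m"
    using less_imp_Suc_add by blast
  define A' where "A' = (\<lambda>i. A (transpose i0 m i))"
  have "rows_independent A' (Suc m) n"
    using rows_independent_transpose_rows[of i0 k m A n] i0(1) assms by (simp add: A'_def k)
  moreover have "mat_vec A' n v m \<noteq> 0"
    using i0(2) by (simp add: A'_def mat_vec_def)
  ultimately have "\<exists>B. basis_matrix n (row_space A' (Suc m) n \<inter> perp n v) m B"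
    by (blast intro: basis_matrix_row_space_inter_perp_last_pivot)
  moreover have "row_space A' (Suc m) n = row_space A k n"
    using row_space_transpose_rows[of i0 k m A n] i0(1) by (simp add: A'_def k)
  ultimately show ?thesis by auto
qed

definition subspace_dep :: "(nat \<Rightarrow> 'a::field) set \<Rightarrow> nat set \<Rightarrow> bool" where
  "subspace_dep U S \<longleftrightarrow> (\<exists>\<alpha>. (\<exists>j\<in>S. \<alpha> j \<noteq> 0) \<and> (\<forall>x\<in>U. (\<Sum>j\<in>S. \<alpha> j * x j) = 0))"

lemma col_dep_iff_subspace_dep:
  assumes "S \<subseteq> {..<n}"
  shows "col_dep B r S \<longleftrightarrow> subspace_dep (row_space B r n) S"
proof -
  have "(\<forall>x\<in>row_space B r n. (\<Sum>j\<in>S. \<alpha> j * x j) = 0) \<longleftrightarrow> (\<forall>i<r. (\<Sum>j\<in>S. \<alpha> j * B i j) = 0)"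
    for \<alpha>
  proof
    assume "\<forall>x\<in>row_space B r n. (\<Sum>j\<in>S. \<alpha> j * x j) = 0"
    then have "(\<Sum>j\<in>S. \<alpha> j * row_comb B r n (\<lambda>l. if l = i then 1 else 0) j) = 0" for i
      by (simp add: row_space_eq_range)
    then have unit: "(\<Sum>l<r. (if l = i then 1 else 0) * (\<Sum>j\<in>S. \<alpha> j * B l j)) = 0" for i
      by (simp only: sum_mult_row_comb[OF assms])
    show "\<forall>i<r. (\<Sum>j\<in>S. \<alpha> j * B i j) = 0"
    proof (intro allI impI)
      fix i assume "i < r"
      then show "(\<Sum>j\<in>S. \<alpha> j * B i j) = 0"
        using unit[of i] sum_unit_mult[where f = "\<lambda>l. \<Sum>j\<in>S. \<alpha> j * B l j"] by simp
    qed
  qed (simp add: row_space_eq_range sum_mult_row_comb[OF assms])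
  then show ?thesis
    unfolding col_dep_def subspace_dep_def by blast
qed

lemma subspace_matroid_dep_iff_subspace_dep:
  assumes "basis_matrix n U r B" "S \<subseteq> {..<n}"
  shows "subspace_matroid_dep n U S \<longleftrightarrow> subspace_dep U S"
proof -
  obtain r' B' where chosen: "(SOME (r, B). basis_matrix n U r B) = (r', B')"
    by (cases "SOME (r, B). basis_matrix n U r B") auto
  have "basis_matrix n U r' B'"
    using someI[of "\<lambda>(r, B). basis_matrix n U r B" "(r, B)"] assms(1) chosen by auto
  then have "row_space B' r' n = U"
    by (simp add: basis_matrix_def)
  then show ?thesis
    using col_dep_iff_subspace_dep[OF assms(2), of B' r']
    by (simp add: subspace_matroid_dep_def chosen)
qed

lemma annihilates_row_space_inter_perp_iff:
  assumes "S \<subseteq> {..<n}"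
  shows "(\<forall>x\<in>row_space A k n \<inter> perp n v. (\<Sum>j\<in>S. \<alpha> j * x j) = 0) \<longleftrightarrow>
           (\<exists>t. \<forall>i<k. (\<Sum>j\<in>S. \<alpha> j * A i j) = t * mat_vec A n v i)"
  unfolding in_span_iff_annihilator Ball_def row_space_inter_perp
  by (auto simp: sum_mult_row_comb[OF assms])

lemma contr_dep_iff_subspace_dep:
  assumes "\<forall>i<k. u i = mat_vec A n v i" "S \<subseteq> {..<n}"
  shows "contr_dep A k u S \<longleftrightarrow> subspace_dep (row_space A k n \<inter> perp n v) S"
  using annihilates_row_space_inter_perp_iff[OF assms(2), of A k v] assms(1)
  unfolding contr_dep_def subspace_dep_def by simp

lemma contr_dep_eq_bullet_contr_dep:
  assumes "rows_independent A k n" "\<forall>i<k. u i = mat_vec A n v i"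
  shows "same_matroid n (contr_dep A k u) (bullet_contr_dep A k n v)"
  unfolding same_matroid_def
proof (intro allI impI)
  fix S :: "nat set"
  assume "S \<subseteq> {0..<n}"
  then have S: "S \<subseteq> {..<n}" by auto
  obtain r B where "basis_matrix n (row_space A k n \<inter> perp n v) r B"
    using basis_matrix_row_space_inter_perp_exists[OF assms(1)] by blast
  then show "contr_dep A k u S \<longleftrightarrow> bullet_contr_dep A k n v S"
    unfolding bullet_contr_dep_def
    by (simp add: subspace_matroid_dep_iff_subspace_dep[OF _ S] contr_dep_iff_subspace_dep[OF assms(2) S])
qed

theorem lemma19:
  fixes A :: "nat \<Rightarrow> nat \<Rightarrow> 'a::field" and k n :: nat
  assumes "rows_independent A k n"
  shows "(\<forall>u. \<exists>v. same_matroid n (contr_dep A k u) (bullet_contr_dep A k n v)) \<and>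
         (\<forall>v. \<exists>u. same_matroid n (contr_dep A k u) (bullet_contr_dep A k n v))"
proof (intro conjI allI)
  fix u :: "nat \<Rightarrow> 'a"
  obtain v where "\<forall>i<k. u i = mat_vec A n v i"
    using mat_vec_surj[OF assms, of u] by metis
  then show "\<exists>v. same_matroid n (contr_dep A k u) (bullet_contr_dep A k n v)"
    using contr_dep_eq_bullet_contr_dep[OF assms] by blast
next
  fix v :: "nat \<Rightarrow> 'a"
  show "\<exists>u. same_matroid n (contr_dep A k u) (bullet_contr_dep A k n v)"
    using contr_dep_eq_bullet_contr_dep[OF assms, of "mat_vec A n v" v] by blast
qed

end
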